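(* Let $p$ be an odd prime, $q=p^m$, $q=et+1$ with integers $e\geq 2,t\geq 1$, $R_{e,q}=\mathbb{F}_q[u]/\langle u^e-1\rangle$, and let $\varphi:R_{e,q}^n\to\mathbb{F}_q^{en}$ be the Gray map defined by a matrix $M\in GL_e(\mathbb{F}_q)$ with $MM^T=\gamma I_e$, $\gamma\in\mathbb{F}_q^*$ (see context). A linear code $\mathcal{C}$ of length $n$ over $R_{e,q}$ is an LCD code if and only if $\varphi(\mathcal{C})$ is an LCD code of length $en$ over $\mathbb{F}_q$.
   Context: Write $u^e-1=\prod_{i=1}^e(u-\alpha_i)$ over $\mathbb{F}_q$, $G_i=u-\alpha_i$, $\widehat{G}_i=(u^e-1)/G_i$, $z_iG_i+h_i\widehat{G}_i=1$, $\mu_i=h_i\widehat{G}_i$; these are pairwise orthogonal idempotents summing to $1$, and each $r\in R_{e,q}$ is uniquely $r=\sum_i s_i\mu_i$, $s_i\in\mathbb{F}_q$. The Gray map is $\varphi(r_0,\dots,r_{n-1})=(\boldsymbol{r_0}M,\dots,\boldsymbol{r_{n-1}}M)$ with $\boldsymbol{r_j}=(s_{j,1},\dots,s_{j,e})$ for $r_j=\sum_i s_{j,i}\mu_i$. A code is LCD if $\mathcal{C}\cap\mathcal{C}^\perp=\{0\}$, with Euclidean duals. *)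

theory Defs
  imports "HOL-Computational_Algebra.Polynomial" "HOL-Library.Cardinality"
begin

text \<open>The ring R_{e,q} = F_q[u]/(u^e - 1) is represented by its canonical
representatives: polynomials of degree < e, with multiplication reduced mod u^e - 1.\<close>

definition uf :: "nat \<Rightarrow> 'a::field poly" where
  "uf e = monom 1 e - 1"

definition Rset :: "nat \<Rightarrow> 'a::field poly set" where
  "Rset e = {r. degree r < e}"

definition Rmult :: "nat \<Rightarrow> 'a::field poly \<Rightarrow> 'a poly \<Rightarrow> 'a poly" where
  "Rmult e a b = (a * b) mod uf e"

definition Rvecs :: "nat \<Rightarrow> nat \<Rightarrow> 'a::field poly list set" where
  "Rvecs e n = {xs. length xs = n \<and> set xs \<subseteq> Rset e}"

definition linear_code_R :: "nat \<Rightarrow> nat \<Rightarrow> 'a::field poly list set \<Rightarrow> bool" where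
  "linear_code_R e n C \<longleftrightarrow>
     C \<subseteq> Rvecs e n \<and> replicate n 0 \<in> C \<and>
     (\<forall>x\<in>C. \<forall>y\<in>C. map2 (+) x y \<in> C) \<and>
     (\<forall>r\<in>Rset e. \<forall>x\<in>C. map (Rmult e r) x \<in> C)"

definition R_inner :: "nat \<Rightarrow> 'a::field poly list \<Rightarrow> 'a poly list \<Rightarrow> 'a poly" where
  "R_inner e xs ys = (\<Sum>j<length xs. xs ! j * ys ! j) mod uf e"

definition R_dual :: "nat \<Rightarrow> nat \<Rightarrow> 'a::field poly list set \<Rightarrow> 'a poly list set" where
  "R_dual e n C = {y \<in> Rvecs e n. \<forall>x\<in>C. R_inner e x y = 0}"

definition LCD_R :: "nat \<Rightarrow> nat \<Rightarrow> 'a::field poly list set \<Rightarrow> bool" where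
  "LCD_R e n C \<longleftrightarrow> C \<inter> R_dual e n C = {replicate n 0}"

definition F_dual :: "nat \<Rightarrow> 'a::field list set \<Rightarrow> 'a list set" where
  "F_dual N D = {y. length y = N \<and> (\<forall>x\<in>D. (\<Sum>k<N. x ! k * y ! k) = 0)}"

definition LCD_F :: "nat \<Rightarrow> 'a::field list set \<Rightarrow> bool" where
  "LCD_F N D \<longleftrightarrow> D \<inter> F_dual N D = {replicate N 0}"

text \<open>Idempotents (indices 0..e-1 instead of 1..e).\<close>
definition Gp :: "(nat \<Rightarrow> 'a::field) \<Rightarrow> nat \<Rightarrow> 'a poly" where
  "Gp \<alpha> i = [:- \<alpha> i, 1:]"

definition Ghat :: "nat \<Rightarrow> (nat \<Rightarrow> 'a::field) \<Rightarrow> nat \<Rightarrow> 'a poly" where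
  "Ghat e \<alpha> i = uf e div Gp \<alpha> i"

definition hcoef :: "nat \<Rightarrow> (nat \<Rightarrow> 'a::field) \<Rightarrow> nat \<Rightarrow> 'a poly" where
  "hcoef e \<alpha> i = (SOME h. \<exists>z. z * Gp \<alpha> i + h * Ghat e \<alpha> i = 1)"

definition mu :: "nat \<Rightarrow> (nat \<Rightarrow> 'a::field) \<Rightarrow> nat \<Rightarrow> 'a poly" where
  "mu e \<alpha> i = (hcoef e \<alpha> i * Ghat e \<alpha> i) mod uf e"

definition coords :: "nat \<Rightarrow> (nat \<Rightarrow> 'a::field) \<Rightarrow> 'a poly \<Rightarrow> nat \<Rightarrow> 'a" where
  "coords e \<alpha> r = (THE s. (\<forall>i. e \<le> i \<longrightarrow> s i = 0) \<and>
                        r = (\<Sum>i<e. smult (s i) (mu e \<alpha> i)))"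

text \<open>Gray map: (r_0,...,r_{n-1}) \<mapsto> (s_0 M, ..., s_{n-1} M), M an e x e matrix
  given as a function on indices < e.\<close>
definition gray :: "nat \<Rightarrow> (nat \<Rightarrow> 'a::field) \<Rightarrow> (nat \<Rightarrow> nat \<Rightarrow> 'a) \<Rightarrow> 'a poly list \<Rightarrow> 'a list" where
  "gray e \<alpha> M xs =
     concat (map (\<lambda>r. map (\<lambda>k. \<Sum>i<e. coords e \<alpha> r i * M i k) [0..<e]) xs)"

end

theory Submission
  imports Defs
begin

text \<open>Since the characteristic of \<open>\<bbbF>\<^sub>q\<close> does not divide \<open>e\<close>, the roots \<open>\<alpha>\<^sub>i\<close>
of \<open>u\<^sup>e - 1\<close> are distinct, so evaluation \<open>r \<mapsto> (r(\<alpha>\<^sub>i))\<^sub>i\<close> is the Chinese remainder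
isomorphism \<open>R \<cong> \<bbbF>\<^sub>q\<^sup>e\<close>, and the coordinate \<open>s\<^sub>i\<close> of \<open>r\<close> is just \<open>r(\<alpha>\<^sub>i)\<close>.
Because \<open>M M\<^sup>T = \<gamma> I\<close>, the Gray map is a similitude:
\<open>\<langle>\<phi> x, \<phi> y\<rangle> = \<gamma> \<Sum>\<^sub>i (x\<cdot>y)(\<alpha>\<^sub>i)\<close>, where \<open>x\<cdot>y\<close> is the inner product over \<open>R\<close>; and
\<open>x\<cdot>y = 0\<close> iff all values \<open>(x\<cdot>y)(\<alpha>\<^sub>i)\<close> vanish. So \<open>y \<in> C\<^sup>\<bottom>\<close> implies
\<open>\<phi> y \<in> \<phi>(C)\<^sup>\<bottom>\<close>. Conversely, \<open>C\<close> is an \<open>R\<close>-module, so it contains \<open>\<mu>\<^sub>i x\<close>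
for \<open>x \<in> C\<close>, and \<open>\<langle>\<phi>(\<mu>\<^sub>i x), \<phi> y\<rangle> = \<gamma> (x\<cdot>y)(\<alpha>\<^sub>i)\<close>. As moreover \<open>\<phi> y = 0\<close> only
for \<open>y = 0\<close>, \<open>\<phi>\<close> maps the hull \<open>C \<inter> C\<^sup>\<bottom>\<close> onto \<open>\<phi>(C) \<inter> \<phi>(C)\<^sup>\<bottom>\<close>.\<close>

lemma of_nat_CARD_eq_0: "of_nat CARD('a::{finite,ring_1}) = (0::'a)"
proof -
  have "(\<Sum>x\<in>UNIV. x + 1) = (\<Sum>x\<in>UNIV. (x::'a))"
    by (rule sum.reindex_bij_witness[of _ "\<lambda>x. x - 1" "\<lambda>x. x + 1"]) auto
  then show ?thesis
    by (simp add: sum.distrib)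
qed

lemma of_nat_nonzero_if_CARD_eq_mult_plus_1:
  assumes "CARD('a::{finite,ring_1}) = e * t + 1"
  shows "of_nat e \<noteq> (0::'a)"
proof
  assume "of_nat e = (0::'a)"
  then have "of_nat CARD('a) = (1::'a)"
    using assms by simp
  then show False
    by (simp add: of_nat_CARD_eq_0)
qed

lemma image_Int_eq_singleton_iff:
  assumes "a \<in> C" and "\<forall>y\<in>C. f y = b \<longleftrightarrow> y = a" and "\<forall>y\<in>C. f y \<in> Q \<longleftrightarrow> y \<in> P"
  shows "f ` C \<inter> Q = {b} \<longleftrightarrow> C \<inter> P = {a}"
proof
  assume image: "f ` C \<inter> Q = {b}"
  have "y = a" if "y \<in> C" "y \<in> P" for y
    using that assms(2,3) image by blast
  moreover have "a \<in> P"
    using assms image by auto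
  ultimately show "C \<inter> P = {a}"
    using assms(1) by blast
next
  assume "C \<inter> P = {a}"
  then show "f ` C \<inter> Q = {b}"
    using assms by auto
qed

lemma sum_list_map2_eq_sum_nth:
  "length ys = length xs \<Longrightarrow> sum_list (map2 f xs ys) = (\<Sum>j<length xs. f (xs ! j) (ys ! j))"
  by (simp add: sum_list_sum_nth atLeast0LessThan)

lemma sum_list_map2_mult_concat:
  assumes "\<And>x. length (f x) = d" and "length xs = length ys"
  shows "sum_list (map2 (*) (concat (map f xs)) (concat (map f ys)))
       = sum_list (map2 (\<lambda>x y. sum_list (map2 (*) (f x) (f y))) xs ys)"
  using assms(2) by (induction xs ys rule: list_induct2) (simp_all add: assms(1))

definition vec_mat_mult :: "nat \<Rightarrow> (nat \<Rightarrow> nat \<Rightarrow> 'a::comm_semiring_0) \<Rightarrow> (nat \<Rightarrow> 'a) \<Rightarrow> 'a list" where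
  "vec_mat_mult e M v = map (\<lambda>k. \<Sum>i<e. v i * M i k) [0..<e]"

lemma length_vec_mat_mult [simp]: "length (vec_mat_mult e M v) = e"
  by (simp add: vec_mat_mult_def)

lemma inner_vec_mat_mult:
  fixes M :: "nat \<Rightarrow> nat \<Rightarrow> 'a::comm_semiring_1"
  assumes orth: "\<forall>i<e. \<forall>k<e. (\<Sum>j<e. M i j * M k j) = (if i = k then \<gamma> else 0)"
  shows "sum_list (map2 (*) (vec_mat_mult e M a) (vec_mat_mult e M b)) = \<gamma> * (\<Sum>i<e. a i * b i)"
proof -
  have "sum_list (map2 (*) (vec_mat_mult e M a) (vec_mat_mult e M b))
      = (\<Sum>k<e. (\<Sum>i<e. a i * M i k) * (\<Sum>l<e. b l * M l k))"
    by (simp add: vec_mat_mult_def map2_map_map sum_list_sum_nth atLeast0LessThan)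
  also have "\<dots> = (\<Sum>k<e. \<Sum>i<e. \<Sum>l<e. a i * b l * (M i k * M l k))"
    by (simp add: sum_product mult_ac)
  also have "\<dots> = (\<Sum>i<e. \<Sum>k<e. \<Sum>l<e. a i * b l * (M i k * M l k))"
    by (rule sum.swap)
  also have "\<dots> = (\<Sum>i<e. \<Sum>l<e. \<Sum>k<e. a i * b l * (M i k * M l k))"
    by (rule sum.cong[OF refl], rule sum.swap)
  also have "\<dots> = (\<Sum>i<e. \<Sum>l<e. a i * b l * (\<Sum>k<e. M i k * M l k))"
    by (simp add: sum_distrib_left)
  also have "\<dots> = (\<Sum>i<e. \<Sum>l<e. a i * b l * (if i = l then \<gamma> else 0))"
    using orth by simp
  also have "\<dots> = \<gamma> * (\<Sum>i<e. a i * b i)"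
    by (simp add: sum_distrib_left mult_ac if_distrib sum.delta cong: if_cong)
  finally show ?thesis .
qed

lemma eq_0_if_vec_mat_mult_eq_0:
  fixes M :: "nat \<Rightarrow> nat \<Rightarrow> 'a::field"
  assumes orth: "\<forall>i<e. \<forall>k<e. (\<Sum>j<e. M i j * M k j) = (if i = k then \<gamma> else 0)"
    and "\<gamma> \<noteq> 0" and "set (vec_mat_mult e M v) \<subseteq> {0}" and "l < e"
  shows "v l = 0"
proof -
  have "\<gamma> * v l = \<gamma> * (\<Sum>i<e. v i * (if i = l then 1 else 0))"
    using \<open>l < e\<close> by (simp add: if_distrib sum.delta cong: if_cong)
  also have "\<dots> = sum_list (map2 (*) (vec_mat_mult e M v) (vec_mat_mult e M (\<lambda>i. if i = l then 1 else 0)))"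
    by (rule inner_vec_mat_mult[OF orth, symmetric])
  also have "\<dots> = 0"
  proof -
    have "vec_mat_mult e M v ! k = 0" if "k < e" for k
      using assms(3) nth_mem[of k "vec_mat_mult e M v"] that by fastforce
    then show ?thesis by (simp add: sum_list_map2_eq_sum_nth)
  qed
  finally show ?thesis using \<open>\<gamma> \<noteq> 0\<close> by simp
qed

lemma poly_pderiv_eq_0_if_double_root:
  fixes p :: "'a::idom poly"
  assumes "[:- a, 1:] ^ 2 dvd p"
  shows "poly (pderiv p) a = 0"
proof -
  obtain q where p: "p = [:- a, 1:] ^ Suc 1 * q"
    using assms by (auto simp: numeral_2_eq_2 elim: dvdE)
  have "pderiv p = [:- a, 1:] ^ Suc 1 * pderiv q + smult (of_nat (Suc 1)) (q * [:- a, 1:] ^ 1)"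
    unfolding p by (rule lemma_order_pderiv1)
  then show ?thesis
    by simp
qed

locale uf_split =
  fixes e :: nat and \<alpha> :: "nat \<Rightarrow> 'a::field"
  assumes uf_eq_prod: "uf e = (\<Prod>i<e. [:- \<alpha> i, 1:])"
    and of_nat_e_nonzero: "of_nat e \<noteq> (0::'a)"
begin

lemma uf_nonzero: "uf e \<noteq> (0::'a poly)"
  by (simp add: uf_eq_prod)

lemma degree_uf: "degree (uf e :: 'a poly) = e"
  by (simp add: uf_eq_prod degree_prod_eq_sum_degree)

lemma e_pos: "0 < e"
  using uf_nonzero by (cases e) (simp_all add: uf_def)

lemma poly_uf_alpha: "i < e \<Longrightarrow> poly (uf e) (\<alpha> i) = 0"
  by (auto simp: uf_eq_prod poly_prod)

lemma poly_pderiv_uf_nonzero: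
  assumes "poly (uf e) a = (0::'a)"
  shows "poly (pderiv (uf e)) a \<noteq> 0"
proof
  assume "poly (pderiv (uf e)) a = 0"
  moreover have "pderiv (uf e :: 'a poly) = monom (of_nat e) (e - 1)"
    by (simp add: uf_def pderiv_diff pderiv_monom)
  ultimately have "of_nat e * a ^ (e - 1) = 0" and "a ^ e = 1"
    using assms by (simp_all add: uf_def poly_monom)
  then show False
    using of_nat_e_nonzero e_pos by (cases e) auto
qed

lemma inj_on_alpha: "inj_on \<alpha> {..<e}"
proof (rule inj_onI, rule ccontr)
  fix i k assume ik: "i \<in> {..<e}" "k \<in> {..<e}" "\<alpha> i = \<alpha> k" "i \<noteq> k"
  have "(\<Prod>j\<in>{i, k}. [:- \<alpha> j, 1:]) dvd uf e"
    unfolding uf_eq_prod using ik by (intro prod_dvd_prod_subset) auto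
  then have "[:- \<alpha> i, 1:] ^ 2 dvd uf e"
    using ik(3,4) by (simp add: power2_eq_square)
  then have "poly (pderiv (uf e)) (\<alpha> i) = 0"
    by (rule poly_pderiv_eq_0_if_double_root)
  then show False
    using poly_pderiv_uf_nonzero poly_uf_alpha ik(1) by blast
qed

lemma eq_0_if_poly_alpha_eq_0:
  assumes "degree r < e" and "\<forall>i<e. poly r (\<alpha> i) = 0"
  shows "r = 0"
proof (rule poly_eqI_degree[of "\<alpha> ` {..<e}"])
  show "card (\<alpha> ` {..<e}) > degree r" and "card (\<alpha> ` {..<e}) > degree 0"
    using assms(1) e_pos by (simp_all add: card_image inj_on_alpha)
qed (use assms(2) in auto)

lemma degree_mod_uf: "degree (r mod uf e :: 'a poly) < e"
  using degree_mod_less[OF uf_nonzero, of r] degree_uf e_pos by auto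

lemma mod_uf_eq_0_iff: "r mod uf e = (0::'a poly) \<longleftrightarrow> (\<forall>i<e. poly r (\<alpha> i) = 0)"
  using eq_0_if_poly_alpha_eq_0[OF degree_mod_uf] poly_mod[OF poly_uf_alpha]
  by (metis poly_0)

lemma Ghat_eq_prod:
  assumes "i < e"
  shows "Ghat e \<alpha> i = (\<Prod>j\<in>{..<e}-{i}. [:- \<alpha> j, 1:])"
proof -
  have "uf e = Gp \<alpha> i * (\<Prod>j\<in>{..<e}-{i}. [:- \<alpha> j, 1:])"
    unfolding uf_eq_prod Gp_def using assms by (intro prod.remove) auto
  moreover have "Gp \<alpha> i \<noteq> 0"
    by (simp add: Gp_def)
  ultimately show ?thesis
    unfolding Ghat_def by simp
qed

lemma poly_Ghat_alpha: "i < e \<Longrightarrow> k < e \<Longrightarrow> poly (Ghat e \<alpha> i) (\<alpha> k) = 0 \<longleftrightarrow> k \<noteq> i"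
  using inj_on_alpha by (auto simp: Ghat_eq_prod poly_prod inj_on_def)

lemma hcoef_bezout:
  assumes "i < e"
  shows "\<exists>z. z * Gp \<alpha> i + hcoef e \<alpha> i * Ghat e \<alpha> i = 1"
proof -
  define c where "c = poly (Ghat e \<alpha> i) (\<alpha> i)"
  have "c \<noteq> 0" using poly_Ghat_alpha[OF assms assms] by (simp add: c_def)
  have "poly (Ghat e \<alpha> i - [:c:]) (\<alpha> i) = 0" by (simp add: c_def)
  then obtain Q where "Ghat e \<alpha> i - [:c:] = Gp \<alpha> i * Q"
    unfolding poly_eq_0_iff_dvd Gp_def by (auto elim: dvdE)
  then have "Ghat e \<alpha> i = [:c:] + Gp \<alpha> i * Q"
    by (simp add: algebra_simps)
  then have "smult (- inverse c) Q * Gp \<alpha> i + [:inverse c:] * Ghat e \<alpha> i = 1"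
    using \<open>c \<noteq> 0\<close> by (simp add: algebra_simps one_pCons)
  then have "\<exists>h z. z * Gp \<alpha> i + h * Ghat e \<alpha> i = 1"
    by blast
  then show ?thesis
    unfolding hcoef_def by (rule someI_ex)
qed

lemma poly_mu_alpha:
  assumes "i < e" and "k < e"
  shows "poly (mu e \<alpha> i) (\<alpha> k) = (if k = i then 1 else 0)"
proof -
  obtain z where "z * Gp \<alpha> i + hcoef e \<alpha> i * Ghat e \<alpha> i = 1"
    using hcoef_bezout[OF assms(1)] by blast
  then have "poly (z * Gp \<alpha> i + hcoef e \<alpha> i * Ghat e \<alpha> i) (\<alpha> i) = 1"
    by simp
  then have "poly (hcoef e \<alpha> i) (\<alpha> i) * poly (Ghat e \<alpha> i) (\<alpha> i) = 1"
    by (simp add: Gp_def)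
  moreover have "poly (mu e \<alpha> i) (\<alpha> k) = poly (hcoef e \<alpha> i) (\<alpha> k) * poly (Ghat e \<alpha> i) (\<alpha> k)"
    unfolding mu_def using poly_mod[OF poly_uf_alpha[OF assms(2)]] by simp
  ultimately show ?thesis
    using poly_Ghat_alpha[OF assms] by auto
qed

lemma degree_mu: "degree (mu e \<alpha> i) < e"
  unfolding mu_def by (rule degree_mod_uf)

lemma coords_eq_poly:
  assumes "degree r < e"
  shows "coords e \<alpha> r = (\<lambda>i. if i < e then poly r (\<alpha> i) else 0)"
  unfolding coords_def
proof (rule the_equality)
  let ?s = "\<lambda>i. if i < e then poly r (\<alpha> i) else 0"
  have "r - (\<Sum>i<e. smult (?s i) (mu e \<alpha> i)) = 0"
  proof (rule eq_0_if_poly_alpha_eq_0)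
    show "degree (r - (\<Sum>i<e. smult (?s i) (mu e \<alpha> i))) < e"
      using assms e_pos
      by (intro degree_diff_less degree_sum_less le_less_trans[OF degree_smult_le degree_mu])
    show "\<forall>k<e. poly (r - (\<Sum>i<e. smult (?s i) (mu e \<alpha> i))) (\<alpha> k) = 0"
      by (auto simp: poly_sum poly_mu_alpha if_distrib cong: if_cong)
  qed
  then show "(\<forall>i. e \<le> i \<longrightarrow> ?s i = 0) \<and> r = (\<Sum>i<e. smult (?s i) (mu e \<alpha> i))"
    by simp
next
  fix s assume s: "(\<forall>i. e \<le> i \<longrightarrow> s i = 0) \<and> r = (\<Sum>i<e. smult (s i) (mu e \<alpha> i))"
  have "poly r (\<alpha> k) = s k" if "k < e" for k
    using s that by (simp add: poly_sum poly_mu_alpha if_distrib cong: if_cong)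
  then show "s = (\<lambda>i. if i < e then poly r (\<alpha> i) else 0)"
    using s by (auto simp: not_less)
qed

lemma poly_Rmult_alpha: "k < e \<Longrightarrow> poly (Rmult e a b) (\<alpha> k) = poly a (\<alpha> k) * poly b (\<alpha> k)"
  unfolding Rmult_def by (simp add: poly_mod[OF poly_uf_alpha])

lemma R_inner_eq_0_iff:
  "R_inner e x y = 0 \<longleftrightarrow> (\<forall>i<e. poly (\<Sum>j<length x. x ! j * y ! j) (\<alpha> i) = 0)"
  unfolding R_inner_def by (rule mod_uf_eq_0_iff)

lemma gray_eq_concat:
  assumes "x \<in> Rvecs e n"
  shows "gray e \<alpha> M x = concat (map (\<lambda>r. vec_mat_mult e M (\<lambda>i. poly r (\<alpha> i))) x)"
  unfolding gray_def vec_mat_mult_def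
proof (intro arg_cong[where f = concat] map_cong refl)
  fix r assume "r \<in> set x"
  then have "degree r < e"
    using assms by (auto simp: Rvecs_def Rset_def)
  then show "(\<Sum>i<e. coords e \<alpha> r i * M i k) = (\<Sum>i<e. poly r (\<alpha> i) * M i k)" for k
    by (simp add: coords_eq_poly)
qed

lemma length_gray: "x \<in> Rvecs e n \<Longrightarrow> length (gray e \<alpha> M x) = e * n"
  by (simp add: gray_eq_concat length_concat comp_def sum_list_triv Rvecs_def)

lemma poly_inner_Rmult_mu:
  assumes "i < e" and "k < e"
  shows "poly (\<Sum>j<n. Rmult e (mu e \<alpha> i) (x ! j) * y ! j) (\<alpha> k)
       = (if k = i then poly (\<Sum>j<n. x ! j * y ! j) (\<alpha> k) else 0)"
  using assms by (simp add: poly_sum poly_Rmult_alpha poly_mu_alpha)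

end

locale orthogonal_gray = uf_split e \<alpha> for e and \<alpha> :: "nat \<Rightarrow> 'a::field" +
  fixes M :: "nat \<Rightarrow> nat \<Rightarrow> 'a" and \<gamma> :: 'a
  assumes orth: "\<forall>i<e. \<forall>k<e. (\<Sum>j<e. M i j * M k j) = (if i = k then \<gamma> else 0)"
    and gamma_nonzero: "\<gamma> \<noteq> 0"
begin

lemma inner_gray:
  assumes x: "x \<in> Rvecs e n" and y: "y \<in> Rvecs e n"
  shows "(\<Sum>k<e * n. gray e \<alpha> M x ! k * gray e \<alpha> M y ! k)
       = \<gamma> * (\<Sum>i<e. poly (\<Sum>j<n. x ! j * y ! j) (\<alpha> i))"
proof -
  let ?v = "\<lambda>r. vec_mat_mult e M (\<lambda>i. poly r (\<alpha> i))"
  have n: "length x = n" "length y = n"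
    using x y by (simp_all add: Rvecs_def)
  have "(\<Sum>k<e * n. gray e \<alpha> M x ! k * gray e \<alpha> M y ! k)
      = sum_list (map2 (*) (concat (map ?v x)) (concat (map ?v y)))"
    using length_gray[OF x] length_gray[OF y]
    by (simp add: sum_list_map2_eq_sum_nth gray_eq_concat[OF x] gray_eq_concat[OF y])
  also have "\<dots> = sum_list (map2 (\<lambda>r s. sum_list (map2 (*) (?v r) (?v s))) x y)"
    using n by (intro sum_list_map2_mult_concat) simp_all
  also have "\<dots> = (\<Sum>j<n. \<gamma> * (\<Sum>i<e. poly (x ! j) (\<alpha> i) * poly (y ! j) (\<alpha> i)))"
    using n by (simp add: sum_list_map2_eq_sum_nth inner_vec_mat_mult[OF orth])
  also have "\<dots> = \<gamma> * (\<Sum>i<e. poly (\<Sum>j<n. x ! j * y ! j) (\<alpha> i))"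
    by (simp add: poly_sum sum_distrib_left sum.swap[of _ "{..<n}"])
  finally show ?thesis .
qed

lemma gray_eq_0_iff:
  assumes x: "x \<in> Rvecs e n"
  shows "gray e \<alpha> M x = replicate (e * n) 0 \<longleftrightarrow> x = replicate n 0"
proof
  assume "gray e \<alpha> M x = replicate (e * n) 0"
  then have "set (concat (map (\<lambda>r. vec_mat_mult e M (\<lambda>i. poly r (\<alpha> i))) x)) \<subseteq> {0}"
    by (simp add: gray_eq_concat[OF x] set_replicate_conv_if)
  then have blocks: "set (vec_mat_mult e M (\<lambda>i. poly r (\<alpha> i))) \<subseteq> {0}" if "r \<in> set x" for r
    using that by auto
  have "poly r (\<alpha> i) = 0" if "r \<in> set x" and "i < e" for r i
    using eq_0_if_vec_mat_mult_eq_0[OF orth gamma_nonzero blocks[OF that(1)] that(2)] by simp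
  moreover have "degree r < e" if "r \<in> set x" for r
    using x that by (auto simp: Rvecs_def Rset_def)
  ultimately show "x = replicate n 0"
    using x eq_0_if_poly_alpha_eq_0 by (auto simp: Rvecs_def intro: replicate_eqI)
next
  assume "x = replicate n 0"
  then have "set (gray e \<alpha> M x) \<subseteq> {0}"
    unfolding gray_eq_concat[OF x] by (auto simp: vec_mat_mult_def)
  then show "gray e \<alpha> M x = replicate (e * n) 0"
    using length_gray[OF x] by (intro replicate_eqI) auto
qed

lemma gray_mem_F_dual_iff:
  assumes lin: "linear_code_R e n C" and yC: "y \<in> C"
  shows "gray e \<alpha> M y \<in> F_dual (e * n) (gray e \<alpha> M ` C) \<longleftrightarrow> y \<in> R_dual e n C"
proof -
  let ?S = "\<lambda>x. \<Sum>j<n. x ! j * y ! j"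
  have CR: "C \<subseteq> Rvecs e n"
    using lin by (simp add: linear_code_R_def)
  then have y: "y \<in> Rvecs e n" and len: "\<And>x. x \<in> C \<Longrightarrow> length x = n"
    using yC by (auto simp: Rvecs_def)
  have "(\<Sum>k<e * n. gray e \<alpha> M x ! k * gray e \<alpha> M y ! k) = 0
        \<longleftrightarrow> (\<Sum>i<e. poly (?S x) (\<alpha> i)) = 0" if "x \<in> C" for x
    using inner_gray[OF subsetD[OF CR that] y] gamma_nonzero by simp
  then have "gray e \<alpha> M y \<in> F_dual (e * n) (gray e \<alpha> M ` C)
        \<longleftrightarrow> (\<forall>x\<in>C. (\<Sum>i<e. poly (?S x) (\<alpha> i)) = 0)"
    by (auto simp: F_dual_def length_gray[OF y])
  also have "\<dots> \<longleftrightarrow> (\<forall>x\<in>C. \<forall>i<e. poly (?S x) (\<alpha> i) = 0)"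
  proof (intro ballI iffI)
    fix x assume sums: "\<forall>x\<in>C. (\<Sum>i<e. poly (?S x) (\<alpha> i)) = 0" and xC: "x \<in> C"
    show "\<forall>i<e. poly (?S x) (\<alpha> i) = 0"
    proof (intro allI impI)
      fix i assume i: "i < e"
      \<comment> \<open>the idempotent \<open>\<mu>\<^sub>i\<close> isolates the \<open>i\<close>-th component of the inner product\<close>
      have "map (Rmult e (mu e \<alpha> i)) x \<in> C"
        using lin xC degree_mu by (simp add: linear_code_R_def Rset_def)
      then have "(\<Sum>k<e. poly (\<Sum>j<n. Rmult e (mu e \<alpha> i) (x ! j) * y ! j) (\<alpha> k)) = 0"
        using sums len[OF xC] by auto
      also have "(\<Sum>k<e. poly (\<Sum>j<n. Rmult e (mu e \<alpha> i) (x ! j) * y ! j) (\<alpha> k))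
               = (\<Sum>k<e. if k = i then poly (?S x) (\<alpha> k) else 0)"
        using i by (intro sum.cong) (simp_all add: poly_inner_Rmult_mu)
      finally show "poly (?S x) (\<alpha> i) = 0"
        using i by simp
    qed
  qed simp
  also have "\<dots> \<longleftrightarrow> y \<in> R_dual e n C"
    using y len by (simp add: R_dual_def R_inner_eq_0_iff)
  finally show ?thesis .
qed

theorem LCD_R_iff_LCD_F_gray:
  assumes lin: "linear_code_R e n C"
  shows "LCD_R e n C \<longleftrightarrow> LCD_F (e * n) (gray e \<alpha> M ` C)"
proof -
  have "C \<subseteq> Rvecs e n" and "replicate n 0 \<in> C"
    using lin by (simp_all add: linear_code_R_def)
  then show ?thesis
    unfolding LCD_R_def LCD_F_def
    by (intro image_Int_eq_singleton_iff[symmetric]) (auto simp: gray_eq_0_iff gray_mem_F_dual_iff[OF lin])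
qed

end

theorem theorem4p8:
  fixes p m e t n :: nat
    and \<alpha> :: "nat \<Rightarrow> 'a::{finite,field}"
    and M :: "nat \<Rightarrow> nat \<Rightarrow> 'a"
    and \<gamma> :: 'a
    and C :: "'a poly list set"
  assumes "prime p" and "odd p" and "m \<ge> 1"
    and "CARD('a) = p ^ m"
    and "e \<ge> 2" and "t \<ge> 1" and "CARD('a) = e * t + 1"
    and "uf e = (\<Prod>i<e. [:- \<alpha> i, 1:])"
    and "\<exists>N :: nat \<Rightarrow> nat \<Rightarrow> 'a. \<forall>i<e. \<forall>k<e.
            (\<Sum>j<e. M i j * N j k) = (if i = k then 1 else 0)"
    and "\<gamma> \<noteq> 0"
    and "\<forall>i<e. \<forall>k<e. (\<Sum>j<e. M i j * M k j) = (if i = k then \<gamma> else 0)"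
    and "linear_code_R e n C"
  shows "LCD_R e n C \<longleftrightarrow> LCD_F (e * n) (gray e \<alpha> M ` C)"
proof -
  have "of_nat e \<noteq> (0::'a)"
    using assms(7) by (rule of_nat_nonzero_if_CARD_eq_mult_plus_1)
  then interpret orthogonal_gray e \<alpha> M \<gamma>
    using assms(8,10,11) by unfold_locales
  show ?thesis
    using assms(12) by (rule LCD_R_iff_LCD_F_gray)
qed

end
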